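(* Let $n\geq 2$, $k\geq 0$ an integer, $1\leq i_1,\dots,i_{2k+1}\leq n$, and for $1\leq r\leq n$ let $d_r$ be the number of times $r$ appears in the sequence $(i_1,\dots,i_{2k+1})$, so $\sum_{r=1}^n d_r=2k+1$. If more than one of the integers $d_1,\dots,d_n$ is odd, then for each $1\leq i\leq n$, $$\mathbf{E}\left[\frac{1}{V_n}W(\varphi_i)\,H_{d_1}(W(\varphi_1))H_{d_2}(W(\varphi_2))\cdots H_{d_n}(W(\varphi_n))\right]=0.$$
   Context: $(W_t)_{t\geq0}$ is a standard Brownian motion, $\varphi_i=1_{[i-1,i]}$, $W(\varphi_i)=W_i-W_{i-1}$ (i.i.d. standard Gaussians), $V_n=\big(\sum_{i=1}^n W(\varphi_i)^2\big)^{1/2}$. $H_d(x)=(-1)^d e^{x^2/2}\frac{d^d}{dx^d}e^{-x^2/2}$ is the $d$-th Hermite polynomial. *)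

theory Defs
  imports "HOL-Probability.Probability"
begin

definition hermite :: "nat \<Rightarrow> real \<Rightarrow> real" where
  "hermite d x = (-1) ^ d * exp (x\<^sup>2 / 2) * ((deriv ^^ d) (\<lambda>y. exp (- y\<^sup>2 / 2)) x)"

end

theory Submission
  imports Defs "HOL-Computational_Algebra.Polynomial"
begin

text \<open>Flipping the sign of one coordinate with an odd number of Hermite factors, say the
  r-th one with r \<noteq> i, leaves V and W(\<phi>_i) unchanged and negates the integrand. Since the
  coordinates are independent and each is symmetric, the flip does not change the joint law,
  so the expectation equals its own negative. Integrability comes from
  |W(\<phi>_i)| / V \<le> 1 and the independence of the Hermite factors.\<close>

fun gauss_deriv_poly :: "nat \<Rightarrow> real poly" where
  "gauss_deriv_poly 0 = 1"
| "gauss_deriv_poly (Suc d) = pderiv (gauss_deriv_poly d) - [:0, 1:] * gauss_deriv_poly d"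

lemma has_real_derivative_poly_times_gauss:
  "((\<lambda>y. poly p y * exp (- y\<^sup>2 / 2)) has_real_derivative
     poly (pderiv p - [:0, 1:] * p) x * exp (- x\<^sup>2 / 2)) (at x)"
proof -
  have "((\<lambda>y. poly p y * exp (- y\<^sup>2 / 2)) has_real_derivative
     poly (pderiv p) x * exp (- x\<^sup>2 / 2) + poly p x * (exp (- x\<^sup>2 / 2) * (- (2 * x) / 2))) (at x)"
    by (auto intro!: derivative_eq_intros poly_DERIV)
  then show ?thesis by (simp add: algebra_simps)
qed

lemma deriv_funpow_gauss:
  "(deriv ^^ d) (\<lambda>y::real. exp (- y\<^sup>2 / 2)) = (\<lambda>y. poly (gauss_deriv_poly d) y * exp (- y\<^sup>2 / 2))"
proof (induction d)
  case 0
  then show ?case by simp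
next
  case (Suc d)
  show ?case
    unfolding funpow.simps comp_def Suc gauss_deriv_poly.simps
    by (rule ext, rule DERIV_imp_deriv, rule has_real_derivative_poly_times_gauss)
qed

lemma has_real_derivative_deriv_funpow_gauss:
  "((deriv ^^ d) (\<lambda>y::real. exp (- y\<^sup>2 / 2)) has_real_derivative
    (deriv ^^ Suc d) (\<lambda>y. exp (- y\<^sup>2 / 2)) x) (at x)"
  unfolding deriv_funpow_gauss gauss_deriv_poly.simps
  by (rule has_real_derivative_poly_times_gauss)

lemma deriv_funpow_gauss_uminus:
  "(deriv ^^ d) (\<lambda>y::real. exp (- y\<^sup>2 / 2)) (- x) = (-1) ^ d * (deriv ^^ d) (\<lambda>y. exp (- y\<^sup>2 / 2)) x"
proof (induction d arbitrary: x)
  case 0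
  then show ?case by simp
next
  case (Suc d)
  let ?f = "(deriv ^^ d) (\<lambda>y::real. exp (- y\<^sup>2 / 2))"
  let ?f' = "(deriv ^^ Suc d) (\<lambda>y::real. exp (- y\<^sup>2 / 2))"
  have reflected: "(\<lambda>y. ?f (- y)) = (\<lambda>y. (-1) ^ d * ?f y)"
    using Suc by auto
  have "((\<lambda>y. ?f (- y)) has_real_derivative ?f' (- x) * (- 1)) (at x)"
    by (rule DERIV_chain2[OF has_real_derivative_deriv_funpow_gauss]) (auto intro!: derivative_eq_intros)
  moreover have "((\<lambda>y. (-1) ^ d * ?f y) has_real_derivative (-1) ^ d * ?f' x) (at x)"
    by (rule DERIV_cmult[OF has_real_derivative_deriv_funpow_gauss])
  ultimately have "?f' (- x) * (- 1) = (-1) ^ d * ?f' x"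
    unfolding reflected by (rule DERIV_unique)
  then show ?case by simp
qed

lemma hermite_eq_poly: "hermite d x = (-1) ^ d * poly (gauss_deriv_poly d) x"
  unfolding hermite_def deriv_funpow_gauss by (simp add: mult_exp_exp)

lemma hermite_uminus: "hermite d (- x) = (-1) ^ d * hermite d x"
  unfolding hermite_def using deriv_funpow_gauss_uminus[of d x] by simp

lemma hermite_measurable [measurable]: "hermite d \<in> borel_measurable borel"
proof -
  have "continuous_on UNIV (hermite d)"
    unfolding hermite_eq_poly by (intro continuous_intros)
  then show ?thesis by (rule borel_measurable_continuous_onI)
qed

lemma integrable_std_normal_poly: "integrable lborel (\<lambda>x. std_normal_density x * poly p x)"
proof -
  have "(\<lambda>x. std_normal_density x * poly p x)
      = (\<lambda>x. \<Sum>j\<le>degree p. coeff p j * (std_normal_density x * x ^ j))"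
    by (rule ext) (simp add: poly_altdef sum_distrib_left algebra_simps)
  then show ?thesis
    by (simp add: integrable_std_normal_moment)
qed

lemma integrable_hermite_std_normal:
  assumes "distributed M lborel X (\<lambda>x. ennreal (std_normal_density x))"
  shows "integrable M (\<lambda>\<omega>. hermite d (X \<omega>))"
proof -
  have "integrable lborel (\<lambda>x. std_normal_density x * hermite d x)"
    unfolding hermite_eq_poly
    using integrable_mult_right[OF integrable_std_normal_poly[of "gauss_deriv_poly d"], of "(-1) ^ d"]
    by (simp add: algebra_simps)
  then show ?thesis
    using distributed_integrable[OF assms, of "hermite d"] by simp
qed

lemma (in prob_space) distr_uminus_std_normal:
  assumes "distributed M lborel X (\<lambda>x. ennreal (std_normal_density x))"
  shows "distr M borel (\<lambda>\<omega>. - X \<omega>) = distr M borel X"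
proof -
  have "distributed M lborel (\<lambda>\<omega>. 0 + (-1) * X \<omega>) (normal_density (0 + (-1) * 0) (\<bar>-1\<bar> * 1))"
    by (rule normal_density_affine) (use assms in auto)
  then have minus: "distributed M lborel (\<lambda>\<omega>. - X \<omega>) (\<lambda>x. ennreal (std_normal_density x))"
    by simp
  have "distr M borel (\<lambda>\<omega>. - X \<omega>) = distr M lborel (\<lambda>\<omega>. - X \<omega>)"
    by (rule distr_cong) auto
  also have "\<dots> = distr M lborel X"
    unfolding distributed_distr_eq_density[OF minus] distributed_distr_eq_density[OF assms] ..
  also have "\<dots> = distr M borel X"
    by (rule distr_cong) auto
  finally show ?thesis .
qed

lemma abs_div_sqrt_sum_squares_le_1:
  fixes x :: "'i \<Rightarrow> real"
  assumes "finite I" "i \<in> I"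
  shows "\<bar>x i / sqrt (\<Sum>r\<in>I. (x r)\<^sup>2)\<bar> \<le> 1"
proof -
  have "(x i)\<^sup>2 \<le> (\<Sum>r\<in>I. (x r)\<^sup>2)"
    using assms by (intro member_le_sum) auto
  then have "\<bar>x i\<bar> \<le> sqrt (\<Sum>r\<in>I. (x r)\<^sup>2)"
    using real_sqrt_le_mono by fastforce
  then show ?thesis
    by (cases "sqrt (\<Sum>r\<in>I. (x r)\<^sup>2) = 0") (auto simp: abs_div divide_le_eq_1)
qed

lemma (in prob_space) distr_PiM_flip_symmetric_coordinate:
  fixes X :: "'i \<Rightarrow> 'a \<Rightarrow> real"
  assumes "I \<noteq> {}" and "r \<in> I"
    and rv: "\<And>j. j \<in> I \<Longrightarrow> random_variable borel (X j)"
    and indep: "indep_vars (\<lambda>_. borel) X I"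
    and symmetric: "distr M borel (\<lambda>\<omega>. - X r \<omega>) = distr M borel (X r)"
  shows "distr M (\<Pi>\<^sub>M j\<in>I. borel) (\<lambda>\<omega>. (\<lambda>j\<in>I. X j \<omega>)(r := - X r \<omega>))
       = distr M (\<Pi>\<^sub>M j\<in>I. borel) (\<lambda>\<omega>. \<lambda>j\<in>I. X j \<omega>)"
proof -
  define Y where "Y = (\<lambda>j \<omega>. if j = r then - X j \<omega> else X j \<omega>)"
  have rv_Y: "random_variable borel (Y j)" if "j \<in> I" for j
    using rv[OF that] by (cases "j = r") (simp_all add: Y_def)
  have "indep_vars (\<lambda>_. borel) (\<lambda>j \<omega>. (\<lambda>x::real. if j = r then - x else x) (X j \<omega>)) I"
    by (rule indep_vars_compose2[OF indep]) auto
  then have indep_Y: "indep_vars (\<lambda>_. borel) Y I"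
    by (simp add: Y_def)
  have "(\<lambda>\<omega>. (\<lambda>j\<in>I. X j \<omega>)(r := - X r \<omega>)) = (\<lambda>\<omega>. \<lambda>j\<in>I. Y j \<omega>)"
    using \<open>r \<in> I\<close> by (auto simp: Y_def fun_eq_iff)
  then have "distr M (\<Pi>\<^sub>M j\<in>I. borel) (\<lambda>\<omega>. (\<lambda>j\<in>I. X j \<omega>)(r := - X r \<omega>))
      = (\<Pi>\<^sub>M j\<in>I. distr M borel (Y j))"
    using indep_vars_iff_distr_eq_PiM'[OF \<open>I \<noteq> {}\<close> rv_Y] indep_Y by simp
  also have "\<dots> = (\<Pi>\<^sub>M j\<in>I. distr M borel (X j))"
  proof (rule PiM_cong)
    show "distr M borel (Y j) = distr M borel (X j)" for j
      by (cases "j = r") (simp_all add: Y_def symmetric)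
  qed simp
  also have "\<dots> = distr M (\<Pi>\<^sub>M j\<in>I. borel) (\<lambda>\<omega>. \<lambda>j\<in>I. X j \<omega>)"
    using indep_vars_iff_distr_eq_PiM'[OF \<open>I \<noteq> {}\<close> rv] indep by simp
  finally show ?thesis .
qed

lemma (in prob_space) expectation_odd_in_symmetric_coordinate:
  fixes X :: "'i \<Rightarrow> 'a \<Rightarrow> real" and f :: "('i \<Rightarrow> real) \<Rightarrow> real"
  assumes "I \<noteq> {}" and "r \<in> I"
    and rv: "\<And>j. j \<in> I \<Longrightarrow> random_variable borel (X j)"
    and "indep_vars (\<lambda>_. borel) X I"
    and "distr M borel (\<lambda>\<omega>. - X r \<omega>) = distr M borel (X r)"
    and f_measurable: "f \<in> borel_measurable (\<Pi>\<^sub>M j\<in>I. borel)"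
    and f_odd: "\<And>x. f (x(r := - x r)) = - f x"
  shows "expectation (\<lambda>\<omega>. f (\<lambda>j\<in>I. X j \<omega>)) = 0"
proof -
  let ?X = "\<lambda>\<omega>. \<lambda>j\<in>I. X j \<omega>"
  have X_measurable: "?X \<in> measurable M (\<Pi>\<^sub>M j\<in>I. borel)"
    using rv by (intro measurable_restrict) auto
  have "(\<lambda>\<omega>. \<lambda>j\<in>I. if j = r then - X j \<omega> else X j \<omega>) \<in> measurable M (\<Pi>\<^sub>M j\<in>I. borel)"
  proof (rule measurable_restrict)
    show "random_variable borel (\<lambda>\<omega>. if j = r then - X j \<omega> else X j \<omega>)" if "j \<in> I" for j
      using rv[OF that] by (cases "j = r") (simp_all add: borel_measurable_uminus)
  qed
  moreover have "(\<lambda>\<omega>. \<lambda>j\<in>I. if j = r then - X j \<omega> else X j \<omega>) = (\<lambda>\<omega>. (?X \<omega>)(r := - X r \<omega>))"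
    using \<open>r \<in> I\<close> by (auto simp: fun_eq_iff)
  ultimately have flipped_measurable: "(\<lambda>\<omega>. (?X \<omega>)(r := - X r \<omega>)) \<in> measurable M (\<Pi>\<^sub>M j\<in>I. borel)"
    by simp
  have "expectation (\<lambda>\<omega>. f (?X \<omega>)) = integral\<^sup>L (distr M (\<Pi>\<^sub>M j\<in>I. borel) ?X) f"
    by (rule integral_distr[OF X_measurable f_measurable, symmetric])
  also have "\<dots> = integral\<^sup>L (distr M (\<Pi>\<^sub>M j\<in>I. borel) (\<lambda>\<omega>. (?X \<omega>)(r := - X r \<omega>))) f"
    using distr_PiM_flip_symmetric_coordinate[OF assms(1-5)] by simp
  also have "\<dots> = expectation (\<lambda>\<omega>. f ((?X \<omega>)(r := - X r \<omega>)))"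
    by (rule integral_distr[OF flipped_measurable f_measurable])
  also have "\<dots> = - expectation (\<lambda>\<omega>. f (?X \<omega>))"
    using f_odd[of "?X _"] \<open>r \<in> I\<close> by simp
  finally show ?thesis by simp
qed

lemma (in prob_space) integrable_ratio_times_hermite_product:
  assumes "finite I" and "i \<in> I"
    and indep: "indep_vars (\<lambda>_. borel) G I"
    and normal: "\<And>r. r \<in> I \<Longrightarrow> distributed M lborel (G r) (\<lambda>x. ennreal (std_normal_density x))"
  shows "integrable M (\<lambda>\<omega>. G i \<omega> / sqrt (\<Sum>r\<in>I. (G r \<omega>)\<^sup>2) * (\<Prod>r\<in>I. hermite (d r) (G r \<omega>)))"
proof (rule Bochner_Integration.integrable_bound)
  have [measurable]: "random_variable borel (G r)" if "r \<in> I" for r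
    using distributed_measurable[OF normal[OF that]] by simp
  show "integrable M (\<lambda>\<omega>. \<Prod>r\<in>I. hermite (d r) (G r \<omega>))"
  proof (rule indep_vars_integrable[OF \<open>finite I\<close>])
    show "indep_vars (\<lambda>_. borel) (\<lambda>r \<omega>. hermite (d r) (G r \<omega>)) I"
      by (rule indep_vars_compose2[OF indep]) auto
    show "integrable M (\<lambda>\<omega>. hermite (d r) (G r \<omega>))" if "r \<in> I" for r
      by (rule integrable_hermite_std_normal[OF normal[OF that]])
  qed
  show "(\<lambda>\<omega>. G i \<omega> / sqrt (\<Sum>r\<in>I. (G r \<omega>)\<^sup>2) * (\<Prod>r\<in>I. hermite (d r) (G r \<omega>)))
      \<in> borel_measurable M"
    using \<open>i \<in> I\<close> by measurable
  show "AE \<omega> in M. norm (G i \<omega> / sqrt (\<Sum>r\<in>I. (G r \<omega>)\<^sup>2) * (\<Prod>r\<in>I. hermite (d r) (G r \<omega>)))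
      \<le> norm (\<Prod>r\<in>I. hermite (d r) (G r \<omega>))"
  proof (rule AE_I2)
    fix \<omega>
    have "\<bar>G i \<omega> / sqrt (\<Sum>r\<in>I. (G r \<omega>)\<^sup>2)\<bar> \<le> 1"
      using abs_div_sqrt_sum_squares_le_1[OF assms(1,2), of "\<lambda>r. G r \<omega>"] by simp
    then show "norm (G i \<omega> / sqrt (\<Sum>r\<in>I. (G r \<omega>)\<^sup>2) * (\<Prod>r\<in>I. hermite (d r) (G r \<omega>)))
        \<le> norm (\<Prod>r\<in>I. hermite (d r) (G r \<omega>))"
      unfolding real_norm_def abs_mult by (intro mult_left_le_one_le) auto
  qed
qed

lemma prod_flip_odd_factor:
  fixes h :: "'i \<Rightarrow> real \<Rightarrow> real"
  assumes "finite I" and "r \<in> I" and "\<And>y. h r (- y) = - h r y"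
  shows "(\<Prod>j\<in>I. h j ((x(r := - x r)) j)) = - (\<Prod>j\<in>I. h j (x j))"
proof -
  have "(\<Prod>j\<in>I - {r}. h j ((x(r := - x r)) j)) = (\<Prod>j\<in>I - {r}. h j (x j))"
    by (rule prod.cong) auto
  then have "(\<Prod>j\<in>I. h j ((x(r := - x r)) j)) = h r (- x r) * (\<Prod>j\<in>I - {r}. h j (x j))"
    using prod.remove[OF assms(1,2), of "\<lambda>j. h j ((x(r := - x r)) j)"] by simp
  also have "\<dots> = - (h r (x r) * (\<Prod>j\<in>I - {r}. h j (x j)))"
    using assms(3) by simp
  also have "h r (x r) * (\<Prod>j\<in>I - {r}. h j (x j)) = (\<Prod>j\<in>I. h j (x j))"
    using prod.remove[OF assms(1,2), of "\<lambda>j. h j (x j)"] by simp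
  finally show ?thesis .
qed

lemma (in prob_space) expectation_ratio_times_hermite_product_eq_0:
  assumes "finite I" and "i \<in> I" and "r \<in> I" and "r \<noteq> i" and "odd (d r)"
    and indep: "indep_vars (\<lambda>_. borel) G I"
    and normal: "\<And>r. r \<in> I \<Longrightarrow> distributed M lborel (G r) (\<lambda>x. ennreal (std_normal_density x))"
  shows "expectation (\<lambda>\<omega>. G i \<omega> / sqrt (\<Sum>r\<in>I. (G r \<omega>)\<^sup>2) * (\<Prod>r\<in>I. hermite (d r) (G r \<omega>))) = 0"
proof -
  define f where "f x = x i / sqrt (\<Sum>r\<in>I. (x r)\<^sup>2) * (\<Prod>r\<in>I. hermite (d r) (x r))"
    for x :: "'b \<Rightarrow> real"
  have "expectation (\<lambda>\<omega>. f (\<lambda>j\<in>I. G j \<omega>)) = 0"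
  proof (rule expectation_odd_in_symmetric_coordinate[OF _ \<open>r \<in> I\<close> _ indep])
    show "random_variable borel (G j)" if "j \<in> I" for j
      using distributed_measurable[OF normal[OF that]] by simp
    show "distr M borel (\<lambda>\<omega>. - G r \<omega>) = distr M borel (G r)"
      by (rule distr_uminus_std_normal[OF normal[OF \<open>r \<in> I\<close>]])
    show "f \<in> borel_measurable (\<Pi>\<^sub>M j\<in>I. borel)"
      unfolding f_def using \<open>i \<in> I\<close> by measurable
    show "f (x(r := - x r)) = - f x" for x
    proof -
      have "(\<Sum>j\<in>I. ((x(r := - x r)) j)\<^sup>2) = (\<Sum>j\<in>I. (x j)\<^sup>2)"
        by (rule sum.cong) auto
      then show ?thesis
        using prod_flip_odd_factor[OF \<open>finite I\<close> \<open>r \<in> I\<close>, of "\<lambda>j. hermite (d j)" x]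
          hermite_uminus[of "d r"] \<open>odd (d r)\<close> \<open>r \<noteq> i\<close>
        by (simp add: f_def)
    qed
  qed (use \<open>r \<in> I\<close> in auto)
  then show ?thesis
    using \<open>i \<in> I\<close> by (simp add: f_def cong: sum.cong prod.cong)
qed

lemma exists_other_if_card_gt_1:
  assumes "card {r \<in> I. P r} > 1"
  shows "\<exists>r\<in>I. P r \<and> r \<noteq> i"
proof (rule ccontr)
  assume "\<not> ?thesis"
  then have "card {r \<in> I. P r} \<le> card {i}"
    by (intro card_mono) auto
  with assms show False by simp
qed

theorem lemma3p4:
  fixes M :: "'a measure" and G :: "nat \<Rightarrow> 'a \<Rightarrow> real"
    and n k :: nat and idx :: "nat \<Rightarrow> nat" and i :: nat
  assumes "prob_space M"
    and "prob_space.indep_vars M (\<lambda>_. borel) G {1..n}"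
    and "\<And>r. r \<in> {1..n} \<Longrightarrow> distributed M lborel (G r) (\<lambda>x. ennreal (std_normal_density x))"
    and "n \<ge> 2"
    and "\<And>j. j \<in> {1..2*k+1} \<Longrightarrow> idx j \<in> {1..n}"
    and "card {r \<in> {1..n}. odd (card {j \<in> {1..2*k+1}. idx j = r})} > 1"
    and "i \<in> {1..n}"
  shows "integrable M (\<lambda>\<omega>. G i \<omega> / sqrt (\<Sum>r\<in>{1..n}. (G r \<omega>)\<^sup>2)
            * (\<Prod>r\<in>{1..n}. hermite (card {j \<in> {1..2*k+1}. idx j = r}) (G r \<omega>)))
    \<and> prob_space.expectation M (\<lambda>\<omega>. G i \<omega> / sqrt (\<Sum>r\<in>{1..n}. (G r \<omega>)\<^sup>2)
            * (\<Prod>r\<in>{1..n}. hermite (card {j \<in> {1..2*k+1}. idx j = r}) (G r \<omega>))) = 0"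
proof -
  interpret prob_space M by fact
  obtain r where "r \<in> {1..n}" "r \<noteq> i" "odd (card {j \<in> {1..2*k+1}. idx j = r})"
    using exists_other_if_card_gt_1[OF assms(6)] by blast
  then show ?thesis
    using integrable_ratio_times_hermite_product[of "{1..n}" i G "\<lambda>r. card {j \<in> {1..2*k+1}. idx j = r}"]
      expectation_ratio_times_hermite_product_eq_0[of "{1..n}" i r "\<lambda>r. card {j \<in> {1..2*k+1}. idx j = r}"]
      assms(2,3,7) by simp
qed

end
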